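(* Let $V$ be a vector space over a field $\mathbb{K}$ and let $F,G$ be two bilinear forms on $V$. Let $\mathrm{Rad}_R(G)=\{w\in V: G(v,w)=0 \text{ for all } v\in V\}$. Then for all $u,v\in\mathcal{T}(V)$ and all $w\in \mathcal{T}(\mathrm{Rad}_R(G))\subseteq\mathcal{T}(V)$, $$\Lambda_F(\Lambda_G(u)(v))(w)=\Lambda_{F+G}(u)\big(\Lambda_F(v)(w)\big).$$
   Context: $\mathcal{T}(V)$ is the tensor algebra of $V$ (product $\otimes$), and $\mathcal{T}(\mathrm{Rad}_R(G))$ is the subalgebra generated by $\mathrm{Rad}_R(G)$. For $x\in V$, $e_x(u)=x\otimes u$. For $f\in V^*$, $i_f$ is the unique linear map on $\mathcal{T}(V)$ with $i_f(1)=0$ and $i_f(x\otimes u)=f(x)u-x\otimes i_f(u)$ ($x\in V$). For a bilinear form $F$ and $x\in V$, $i_x^F:=i_{f_x}$ with $f_x(y)=F(x,y)$. $\Lambda_F:\mathcal{T}(V)\to\mathrm{End}(\mathcal{T}(V))$ is the unique unital algebra homomorphism with $\Lambda_F(x)=e_x+i_x^F$ for $x\in V$. *)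

theory Defs
  imports Main "HOL-Library.Poly_Mapping"
begin

text \<open>Every vector space over a field K is free; we take V with an arbitrary
basis indexed by the type 'b, i.e. V = ('b \<Rightarrow>0 'k) (finitely supported coordinate
functions). The tensor algebra T(V) is then the free associative algebra on 'b:
finitely supported functions from words ('b list) to 'k, with concatenation
(convolution) product.\<close>

type_synonym ('b, 'k) vec = "'b \<Rightarrow>\<^sub>0 'k"
type_synonym ('b, 'k) tens = "'b list \<Rightarrow>\<^sub>0 'k"

definition smul :: "'k::field \<Rightarrow> ('a \<Rightarrow>\<^sub>0 'k) \<Rightarrow> ('a \<Rightarrow>\<^sub>0 'k)" where
  "smul c u = Poly_Mapping.map (\<lambda>a. c * a) u"

definition tmult :: "('b, 'k::field) tens \<Rightarrow> ('b, 'k) tens \<Rightarrow> ('b, 'k) tens" (infixl \<open>\<otimes>\<^sub>T\<close> 70) where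
  "tmult u v = Abs_poly_mapping (\<lambda>w. \<Sum>i\<le>length w. Poly_Mapping.lookup u (take i w) * Poly_Mapping.lookup v (drop i w))"

definition tone :: "('b, 'k::field) tens" where
  "tone = Poly_Mapping.single [] 1"

definition emb :: "('b, 'k::field) vec \<Rightarrow> ('b, 'k) tens" where
  "emb x = Abs_poly_mapping (\<lambda>w. case w of [b] \<Rightarrow> Poly_Mapping.lookup x b | _ \<Rightarrow> 0)"

definition lin_map :: "(('a \<Rightarrow>\<^sub>0 'k::field) \<Rightarrow> ('c \<Rightarrow>\<^sub>0 'k)) \<Rightarrow> bool" where
  "lin_map \<phi> \<longleftrightarrow> (\<forall>u v. \<phi> (u + v) = \<phi> u + \<phi> v) \<and> (\<forall>c u. \<phi> (smul c u) = smul c (\<phi> u))"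

definition lin_functional :: "(('b, 'k::field) vec \<Rightarrow> 'k) \<Rightarrow> bool" where
  "lin_functional f \<longleftrightarrow> (\<forall>x y. f (x + y) = f x + f y) \<and> (\<forall>c x. f (smul c x) = c * f x)"

definition bilinear_form :: "(('b, 'k::field) vec \<Rightarrow> ('b, 'k) vec \<Rightarrow> 'k) \<Rightarrow> bool" where
  "bilinear_form F \<longleftrightarrow> (\<forall>x. lin_functional (F x)) \<and> (\<forall>y. lin_functional (\<lambda>x. F x y))"

definition e_op :: "('b, 'k::field) vec \<Rightarrow> ('b, 'k) tens \<Rightarrow> ('b, 'k) tens" where
  "e_op x u = emb x \<otimes>\<^sub>T u"

definition i_op :: "(('b, 'k::field) vec \<Rightarrow> 'k) \<Rightarrow> ('b, 'k) tens \<Rightarrow> ('b, 'k) tens" where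
  "i_op f = (THE \<phi>. lin_map \<phi> \<and> \<phi> tone = 0 \<and>
      (\<forall>x u. \<phi> (emb x \<otimes>\<^sub>T u) = smul (f x) u - emb x \<otimes>\<^sub>T \<phi> u))"

definition iF_op :: "(('b, 'k::field) vec \<Rightarrow> ('b, 'k) vec \<Rightarrow> 'k) \<Rightarrow> ('b, 'k) vec \<Rightarrow> ('b, 'k) tens \<Rightarrow> ('b, 'k) tens" where
  "iF_op F x = i_op (\<lambda>y. F x y)"

definition unital_alg_hom :: "(('b, 'k::field) tens \<Rightarrow> ('b, 'k) tens \<Rightarrow> ('b, 'k) tens) \<Rightarrow> bool" where
  "unital_alg_hom \<Lambda> \<longleftrightarrow>
     (\<forall>u v. \<Lambda> (u + v) = (\<lambda>t. \<Lambda> u t + \<Lambda> v t)) \<and>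
     (\<forall>c u. \<Lambda> (smul c u) = (\<lambda>t. smul c (\<Lambda> u t))) \<and>
     (\<forall>u v. \<Lambda> (u \<otimes>\<^sub>T v) = \<Lambda> u \<circ> \<Lambda> v) \<and>
     \<Lambda> tone = id"

definition Lambda :: "(('b, 'k::field) vec \<Rightarrow> ('b, 'k) vec \<Rightarrow> 'k) \<Rightarrow> ('b, 'k) tens \<Rightarrow> ('b, 'k) tens \<Rightarrow> ('b, 'k) tens" where
  "Lambda F = (THE \<Lambda>. unital_alg_hom \<Lambda> \<and>
      (\<forall>x. \<Lambda> (emb x) = (\<lambda>t. e_op x t + iF_op F x t)))"

definition RadR :: "(('b, 'k::field) vec \<Rightarrow> ('b, 'k) vec \<Rightarrow> 'k) \<Rightarrow> ('b, 'k) vec set" where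
  "RadR G = {w. \<forall>v. G v w = 0}"

inductive_set subalg_gen :: "('b, 'k::field) vec set \<Rightarrow> ('b, 'k) tens set" for S where
  gen: "x \<in> S \<Longrightarrow> emb x \<in> subalg_gen S"
| one: "tone \<in> subalg_gen S"
| add: "u \<in> subalg_gen S \<Longrightarrow> v \<in> subalg_gen S \<Longrightarrow> u + v \<in> subalg_gen S"
| smul: "u \<in> subalg_gen S \<Longrightarrow> smul c u \<in> subalg_gen S"
| mult: "u \<in> subalg_gen S \<Longrightarrow> v \<in> subalg_gen S \<Longrightarrow> u \<otimes>\<^sub>T v \<in> subalg_gen S"

end

theory Submission
  imports Defs
begin

text \<open>
  Induct on \<open>u\<close>, which ranges over the span of \<open>1\<close> and the products \<open>x \<otimes> u\<close>.
  For \<open>u = x \<otimes> u'\<close> put \<open>v' = \<Lambda>\<^sub>G(u')(v)\<close>; the left-hand side is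
  \<open>\<Lambda>\<^sub>F(x \<otimes> v' + i\<^sup>G\<^sub>x v')(w)\<close>. The first summand gives \<open>(e\<^sub>x + i\<^sup>F\<^sub>x)(\<Lambda>\<^sub>F(v')(w))\<close>.
  For the second, \<open>i\<^sup>G\<^sub>x\<close> commutes with \<open>\<Lambda>\<^sub>F(-)(w)\<close>: it anticommutes with every
  \<open>i\<^sup>F\<^sub>y\<close>, and since \<open>G(x, -)\<close> vanishes on \<open>Rad\<^sub>R(G)\<close> it is right \<open>T(Rad\<^sub>R(G))\<close>-linear
  and annihilates \<open>w\<close>. As \<open>i\<^sup>F\<^sub>x + i\<^sup>G\<^sub>x = i\<^sup>F\<^sup>+\<^sup>G\<^sub>x\<close>, the induction hypothesis
  \<open>\<Lambda>\<^sub>F(v')(w) = \<Lambda>\<^sub>F\<^sub>+\<^sub>G(u')(\<Lambda>\<^sub>F(v)(w))\<close> closes the step.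
\<close>

lemma lookup_smul [simp]: "Poly_Mapping.lookup (smul c u) k = c * Poly_Mapping.lookup u k"
  unfolding smul_def by (simp add: map.rep_eq when_def)

lemma smul_add_right: "smul c (u + v) = smul c u + smul c v"
  by (rule poly_mapping_eqI) (simp add: lookup_add algebra_simps)

lemma smul_add_left: "smul (c + d) u = smul c u + smul d u"
  by (rule poly_mapping_eqI) (simp add: lookup_add algebra_simps)

lemma smul_diff_right: "smul c (u - v) = smul c u - smul c v"
  by (rule poly_mapping_eqI) (simp add: lookup_minus algebra_simps)

lemma smul_smul [simp]: "smul c (smul d u) = smul (c * d) u"
  by (rule poly_mapping_eqI) (simp add: algebra_simps)

lemma smul_one [simp]: "smul 1 u = u"
  by (rule poly_mapping_eqI) simp

lemma smul_zero_left [simp]: "smul 0 u = 0"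
  by (rule poly_mapping_eqI) simp

lemma smul_zero_right [simp]: "smul c 0 = 0"
  by (rule poly_mapping_eqI) simp

lemma smul_minus_one: "smul (-1) u = - u"
  by (rule poly_mapping_eqI) simp

lemma smul_single: "smul c (Poly_Mapping.single k d) = Poly_Mapping.single k (c * d)"
  by (rule poly_mapping_eqI) (simp add: lookup_single when_def)

lemma single_eq_smul_single_one: "Poly_Mapping.single k (c::'k::field) = smul c (Poly_Mapping.single k 1)"
  by (simp add: smul_single)

lemma smul_sum: "smul c (sum f S) = (\<Sum>x\<in>S. smul c (f x))"
  by (rule poly_mapping_eqI) (simp add: lookup_sum sum_distrib_left)

lemma keys_smul_subset: "Poly_Mapping.keys (smul c u) \<subseteq> Poly_Mapping.keys u"
  by (auto simp: in_keys_iff)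

lemma poly_mapping_single_induct [case_names zero single add]:
  assumes "P 0" "\<And>k c. P (Poly_Mapping.single k c)" "\<And>f g. P f \<Longrightarrow> P g \<Longrightarrow> P (f + g)"
  shows "P f"
proof (induction f rule: update_induct)
  case const then show ?case using assms(1) .
next
  case (update f a b)
  have "Poly_Mapping.update a b f = f + Poly_Mapping.single a b"
    using update(1)
    by (intro poly_mapping_eqI) (auto simp: lookup_update lookup_add lookup_single in_keys_iff when_def)
  then show ?case using update assms by simp
qed

lemma finite_tmult_support:
  "finite {w. (\<Sum>i\<le>length w. Poly_Mapping.lookup u (take i w) * Poly_Mapping.lookup v (drop i w)) \<noteq> (0::'k::field)}"
proof (rule finite_subset)
  show "finite ((\<lambda>(a, b). a @ b) ` (Poly_Mapping.keys u \<times> Poly_Mapping.keys v))" by simp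
  show "{w. (\<Sum>i\<le>length w. Poly_Mapping.lookup u (take i w) * Poly_Mapping.lookup v (drop i w)) \<noteq> 0}
     \<subseteq> (\<lambda>(a, b). a @ b) ` (Poly_Mapping.keys u \<times> Poly_Mapping.keys v)"
  proof
    fix w
    assume "w \<in> {w. (\<Sum>i\<le>length w. Poly_Mapping.lookup u (take i w) * Poly_Mapping.lookup v (drop i w)) \<noteq> 0}"
    then obtain i where "Poly_Mapping.lookup u (take i w) * Poly_Mapping.lookup v (drop i w) \<noteq> 0"
      by (auto elim: sum.not_neutral_contains_not_neutral)
    then have "take i w \<in> Poly_Mapping.keys u" "drop i w \<in> Poly_Mapping.keys v"
      by (auto simp: in_keys_iff)
    then show "w \<in> (\<lambda>(a, b). a @ b) ` (Poly_Mapping.keys u \<times> Poly_Mapping.keys v)"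
      by (intro image_eqI[of _ _ "(take i w, drop i w)"]) auto
  qed
qed

lemma lookup_tmult:
  "Poly_Mapping.lookup (u \<otimes>\<^sub>T v) w
     = (\<Sum>i\<le>length w. Poly_Mapping.lookup u (take i w) * Poly_Mapping.lookup v (drop i w))"
  unfolding tmult_def using finite_tmult_support[of u v] by simp

lemma tmult_single:
  "Poly_Mapping.single a c \<otimes>\<^sub>T Poly_Mapping.single b d = Poly_Mapping.single (a @ b) (c * d)"
proof (rule poly_mapping_eqI)
  fix w
  have split_iff: "(take i w = a \<and> drop i w = b) \<longleftrightarrow> (i = length a \<and> w = a @ b)" if "i \<le> length w" for i
    using that by (metis append_eq_conv_conj append_take_drop_id length_take min.absorb2)
  have "Poly_Mapping.lookup (Poly_Mapping.single a c \<otimes>\<^sub>T Poly_Mapping.single b d) w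
      = (\<Sum>i\<le>length w. if i = length a \<and> w = a @ b then c * d else 0)"
    unfolding lookup_tmult by (intro sum.cong refl) (auto simp: lookup_single when_def dest: split_iff)
  also have "\<dots> = Poly_Mapping.lookup (Poly_Mapping.single (a @ b) (c * d)) w"
    by (cases "w = a @ b") (auto simp: lookup_single when_def)
  finally show "Poly_Mapping.lookup (Poly_Mapping.single a c \<otimes>\<^sub>T Poly_Mapping.single b d) w
      = Poly_Mapping.lookup (Poly_Mapping.single (a @ b) (c * d)) w" .
qed

lemma tmult_add_left: "(u + u') \<otimes>\<^sub>T v = u \<otimes>\<^sub>T v + u' \<otimes>\<^sub>T v"
  by (rule poly_mapping_eqI) (simp add: lookup_tmult lookup_add distrib_right sum.distrib)

lemma tmult_add_right: "u \<otimes>\<^sub>T (v + v') = u \<otimes>\<^sub>T v + u \<otimes>\<^sub>T v'"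
  by (rule poly_mapping_eqI) (simp add: lookup_tmult lookup_add distrib_left sum.distrib)

lemma tmult_smul_left: "smul c u \<otimes>\<^sub>T v = smul c (u \<otimes>\<^sub>T v)"
  by (rule poly_mapping_eqI) (simp add: lookup_tmult sum_distrib_left mult.assoc)

lemma tmult_smul_right: "u \<otimes>\<^sub>T smul c v = smul c (u \<otimes>\<^sub>T v)"
  by (rule poly_mapping_eqI) (simp add: lookup_tmult sum_distrib_left algebra_simps)

lemma tmult_zero_left [simp]: "0 \<otimes>\<^sub>T v = 0"
  by (rule poly_mapping_eqI) (simp add: lookup_tmult)

lemma tmult_zero_right [simp]: "u \<otimes>\<^sub>T 0 = 0"
  by (rule poly_mapping_eqI) (simp add: lookup_tmult)

lemma tmult_diff_left: "(u - u') \<otimes>\<^sub>T v = u \<otimes>\<^sub>T v - u' \<otimes>\<^sub>T v"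
  by (rule poly_mapping_eqI) (simp add: lookup_tmult lookup_minus left_diff_distrib sum_subtractf)

lemma tmult_diff_right: "u \<otimes>\<^sub>T (v - v') = u \<otimes>\<^sub>T v - u \<otimes>\<^sub>T v'"
  by (rule poly_mapping_eqI) (simp add: lookup_tmult lookup_minus right_diff_distrib sum_subtractf)

lemma tmult_minus_right: "u \<otimes>\<^sub>T (- v) = - (u \<otimes>\<^sub>T v)"
  using tmult_diff_right[of u 0 v] by simp

lemma tmult_assoc: "(u \<otimes>\<^sub>T v) \<otimes>\<^sub>T z = u \<otimes>\<^sub>T (v \<otimes>\<^sub>T z)"
proof (induction u rule: poly_mapping_single_induct)
  case (single a c)
  show ?case
  proof (induction v rule: poly_mapping_single_induct)
    case (single b d)
    show ?case
      by (induction z rule: poly_mapping_single_induct)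
        (simp_all add: tmult_single tmult_add_right mult.assoc)
  qed (simp_all add: tmult_add_left tmult_add_right)
qed (simp_all add: tmult_add_left)

lemma tone_tmult [simp]: "tone \<otimes>\<^sub>T u = u"
  unfolding tone_def
  by (induction u rule: poly_mapping_single_induct) (simp_all add: tmult_single tmult_add_right)

lemma tmult_tone [simp]: "u \<otimes>\<^sub>T tone = u"
  unfolding tone_def
  by (induction u rule: poly_mapping_single_induct) (simp_all add: tmult_single tmult_add_left)

lemma lookup_emb: "Poly_Mapping.lookup (emb x) w = (case w of [b] \<Rightarrow> Poly_Mapping.lookup x b | _ \<Rightarrow> 0)"
proof -
  have "{w. (case w of [b] \<Rightarrow> Poly_Mapping.lookup x b | _ \<Rightarrow> 0) \<noteq> 0} \<subseteq> (\<lambda>b. [b]) ` Poly_Mapping.keys x"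
  proof
    fix w assume "w \<in> {w. (case w of [b] \<Rightarrow> Poly_Mapping.lookup x b | _ \<Rightarrow> 0) \<noteq> 0}"
    then show "w \<in> (\<lambda>b. [b]) ` Poly_Mapping.keys x"
      by (cases w rule: list.exhaust; cases "tl w") (auto simp: in_keys_iff split: list.splits)
  qed
  then have "finite {w. (case w of [b] \<Rightarrow> Poly_Mapping.lookup x b | _ \<Rightarrow> 0) \<noteq> 0}"
    by (rule finite_subset) simp
  then show ?thesis unfolding emb_def by simp
qed

lemma emb_single: "emb (Poly_Mapping.single b c) = Poly_Mapping.single [b] c"
  by (rule poly_mapping_eqI) (auto simp: lookup_emb lookup_single when_def split: list.splits)

lemma emb_zero [simp]: "emb 0 = 0"
  by (rule poly_mapping_eqI) (auto simp: lookup_emb split: list.splits)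

lemma emb_add: "emb (x + y) = emb x + emb y"
  by (rule poly_mapping_eqI) (auto simp: lookup_emb lookup_add split: list.splits)

lemma emb_smul: "emb (smul c x) = smul c (emb x)"
  by (rule poly_mapping_eqI) (auto simp: lookup_emb split: list.splits)

lemma tens_induct [case_names one emb add smul]:
  fixes P :: "('b, 'k::field) tens \<Rightarrow> bool"
  assumes one: "P tone" and emb: "\<And>x u. P u \<Longrightarrow> P (emb x \<otimes>\<^sub>T u)"
    and add: "\<And>u v. P u \<Longrightarrow> P v \<Longrightarrow> P (u + v)" and smul: "\<And>c u. P u \<Longrightarrow> P (smul c u)"
  shows "P u"
proof (induction u rule: poly_mapping_single_induct)
  case zero
  show ?case using smul[OF one, of 0] by simp
next
  case (single w c)
  show ?case
  proof (induction w arbitrary: c)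
    case Nil
    show ?case using smul[OF one, of c] by (simp add: tone_def smul_single)
  next
    case (Cons b w)
    show ?case using emb[OF Cons, of "Poly_Mapping.single b 1"] by (simp add: emb_single tmult_single)
  qed
qed (rule add)

lemma lin_map_add: "lin_map \<phi> \<Longrightarrow> \<phi> (u + v) = \<phi> u + \<phi> v"
  unfolding lin_map_def by blast

lemma lin_map_smul: "lin_map \<phi> \<Longrightarrow> \<phi> (smul c u) = smul c (\<phi> u)"
  unfolding lin_map_def by blast

lemma lin_map_zero: "lin_map \<phi> \<Longrightarrow> \<phi> 0 = 0"
  using lin_map_smul[of \<phi> 0 0] by simp

lemma lin_map_diff: "lin_map \<phi> \<Longrightarrow> \<phi> (u - v) = \<phi> u - \<phi> v"
  using lin_map_add[of \<phi> u "- v"] lin_map_smul[of \<phi> "-1" v] by (simp add: smul_minus_one)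

lemma lin_functional_zero: "lin_functional f \<Longrightarrow> f 0 = 0"
  unfolding lin_functional_def by (metis smul_zero_left mult_zero_left)

lemma lin_functional_add: "lin_functional f \<Longrightarrow> lin_functional g \<Longrightarrow> lin_functional (\<lambda>z. f z + g z)"
  unfolding lin_functional_def by (simp add: algebra_simps)

lemma lin_functional_scale: "lin_functional f \<Longrightarrow> lin_functional (\<lambda>z. c * f z)"
  unfolding lin_functional_def by (simp add: algebra_simps)

lemma bilinear_form_right: "bilinear_form F \<Longrightarrow> lin_functional (F x)"
  unfolding bilinear_form_def by blast

lemma bilinear_form_add_left: "bilinear_form F \<Longrightarrow> F (x + y) = (\<lambda>z. F x z + F y z)"
  unfolding bilinear_form_def lin_functional_def by auto

lemma bilinear_form_smul_left: "bilinear_form F \<Longrightarrow> F (smul c x) = (\<lambda>z. c * F x z)"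
  unfolding bilinear_form_def lin_functional_def by auto

lemma bilinear_form_add:
  "bilinear_form F \<Longrightarrow> bilinear_form G \<Longrightarrow> bilinear_form (\<lambda>x y. F x y + G x y)"
  unfolding bilinear_form_def lin_functional_def by (simp add: algebra_simps)

definition lin_ext :: "('a \<Rightarrow> ('c \<Rightarrow>\<^sub>0 'k::field)) \<Rightarrow> ('a \<Rightarrow>\<^sub>0 'k) \<Rightarrow> ('c \<Rightarrow>\<^sub>0 'k)" where
  "lin_ext h u = (\<Sum>w\<in>Poly_Mapping.keys u. smul (Poly_Mapping.lookup u w) (h w))"

lemma lin_ext_eq_sum_superset:
  assumes "finite S" "Poly_Mapping.keys u \<subseteq> S"
  shows "lin_ext h u = (\<Sum>w\<in>S. smul (Poly_Mapping.lookup u w) (h w))"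
  unfolding lin_ext_def using assms by (intro sum.mono_neutral_left) (auto simp: in_keys_iff)

lemma lin_ext_add: "lin_ext h (u + v) = lin_ext h u + lin_ext h v"
proof -
  let ?S = "Poly_Mapping.keys u \<union> Poly_Mapping.keys v"
  have "lin_ext h (u + v) = (\<Sum>w\<in>?S. smul (Poly_Mapping.lookup (u + v) w) (h w))"
    by (rule lin_ext_eq_sum_superset) (auto simp: keys_add)
  also have "\<dots> = (\<Sum>w\<in>?S. smul (Poly_Mapping.lookup u w) (h w))
                 + (\<Sum>w\<in>?S. smul (Poly_Mapping.lookup v w) (h w))"
    by (simp add: lookup_add smul_add_left sum.distrib)
  also have "\<dots> = lin_ext h u + lin_ext h v"
    using lin_ext_eq_sum_superset[of ?S u h] lin_ext_eq_sum_superset[of ?S v h] by simp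
  finally show ?thesis .
qed

lemma lin_ext_smul: "lin_ext h (smul c u) = smul c (lin_ext h u)"
proof -
  have "lin_ext h (smul c u) = (\<Sum>w\<in>Poly_Mapping.keys u. smul (Poly_Mapping.lookup (smul c u) w) (h w))"
    by (rule lin_ext_eq_sum_superset) (auto simp: keys_smul_subset)
  then show ?thesis by (simp add: lin_ext_def smul_sum)
qed

lemma lin_ext_single: "lin_ext h (Poly_Mapping.single w c) = smul c (h w)"
  by (subst lin_ext_eq_sum_superset[of "{w}"]) (auto simp: lookup_single)

lemma lin_ext_zero [simp]: "lin_ext h 0 = 0"
  by (simp add: lin_ext_def)

lemma lin_map_lin_ext: "lin_map (lin_ext h)"
  unfolding lin_map_def by (simp add: lin_ext_add lin_ext_smul)

lemma lin_ext_add_fun: "lin_ext (\<lambda>w. h1 w + h2 w) u = lin_ext h1 u + lin_ext h2 u"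
  by (simp add: lin_ext_def smul_add_right sum.distrib)

lemma lin_ext_smul_fun: "lin_ext (\<lambda>w. smul c (h w)) u = smul c (lin_ext h u)"
  by (simp add: lin_ext_def smul_sum mult.commute)

definition is_contraction ::
    "(('b, 'k::field) vec \<Rightarrow> 'k) \<Rightarrow> (('b, 'k) tens \<Rightarrow> ('b, 'k) tens) \<Rightarrow> bool" where
  "is_contraction f \<phi> \<longleftrightarrow> lin_map \<phi> \<and> \<phi> tone = 0 \<and>
      (\<forall>x u. \<phi> (emb x \<otimes>\<^sub>T u) = smul (f x) u - emb x \<otimes>\<^sub>T \<phi> u)"

lemma is_contraction_unique:
  assumes "is_contraction f \<phi>" "is_contraction f \<psi>"
  shows "\<phi> = \<psi>"
proof
  fix u
  show "\<phi> u = \<psi> u"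
    using assms unfolding is_contraction_def
    by (induction u rule: tens_induct) (simp_all add: lin_map_add lin_map_smul)
qed

fun contraction_word :: "(('b, 'k::field) vec \<Rightarrow> 'k) \<Rightarrow> 'b list \<Rightarrow> ('b, 'k) tens" where
  "contraction_word f [] = 0"
| "contraction_word f (b # w) = smul (f (Poly_Mapping.single b 1)) (Poly_Mapping.single w 1)
      - Poly_Mapping.single [b] 1 \<otimes>\<^sub>T contraction_word f w"

lemma is_contraction_lin_ext:
  assumes f: "lin_functional f"
  shows "is_contraction f (lin_ext (contraction_word f))"
  unfolding is_contraction_def
proof (intro conjI allI)
  show "lin_map (lin_ext (contraction_word f))" by (rule lin_map_lin_ext)
  show "lin_ext (contraction_word f) tone = 0" by (simp add: tone_def lin_ext_single)
next
  fix x u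
  have f_add: "f (x + y) = f x + f y" and f_smul: "f (smul c x) = c * f x" for x y c
    using f unfolding lin_functional_def by blast+
  show "lin_ext (contraction_word f) (emb x \<otimes>\<^sub>T u) = smul (f x) u - emb x \<otimes>\<^sub>T lin_ext (contraction_word f) u"
  proof (induction x arbitrary: u rule: poly_mapping_single_induct)
    case zero then show ?case by (simp add: lin_functional_zero[OF f])
  next
    case (add x y)
    then show ?case by (simp add: emb_add tmult_add_left lin_ext_add f_add smul_add_left)
  next
    case (single b c)
    have f_single: "f (Poly_Mapping.single b c) = c * f (Poly_Mapping.single b 1)"
      by (subst single_eq_smul_single_one) (simp add: f_smul)
    show ?case
    proof (induction u rule: poly_mapping_single_induct)
      case (add u v)
      then show ?case by (simp add: tmult_add_right lin_ext_add smul_add_right)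
    next
      case (single w d)
      show ?case
        by (simp add: emb_single tmult_single lin_ext_single f_single smul_diff_right tmult_smul_right)
          (simp add: single_eq_smul_single_one[of w d] single_eq_smul_single_one[of "[b]" c]
            tmult_smul_left tmult_smul_right mult_ac)
    qed simp
  qed
qed

lemma is_contraction_i_op: "lin_functional f \<Longrightarrow> is_contraction f (i_op f)"
  unfolding i_op_def is_contraction_def[symmetric]
  by (rule theI[of _ "lin_ext (contraction_word f)"])
    (auto intro: is_contraction_lin_ext is_contraction_unique)

lemma i_op_eqI: "lin_functional f \<Longrightarrow> is_contraction f \<phi> \<Longrightarrow> i_op f = \<phi>"
  using is_contraction_i_op is_contraction_unique by blast

context
  fixes f :: "('b, 'k::field) vec \<Rightarrow> 'k"
  assumes f: "lin_functional f"
begin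

lemma lin_map_i_op: "lin_map (i_op f)"
  using is_contraction_i_op[OF f] unfolding is_contraction_def by blast

lemma i_op_tone [simp]: "i_op f tone = 0"
  using is_contraction_i_op[OF f] unfolding is_contraction_def by blast

lemma i_op_emb_tmult: "i_op f (emb x \<otimes>\<^sub>T u) = smul (f x) u - emb x \<otimes>\<^sub>T i_op f u"
  using is_contraction_i_op[OF f] unfolding is_contraction_def by blast

lemmas i_op_add = lin_map_add[OF lin_map_i_op]
  and i_op_smul = lin_map_smul[OF lin_map_i_op]
  and i_op_diff = lin_map_diff[OF lin_map_i_op]
  and i_op_zero [simp] = lin_map_zero[OF lin_map_i_op]

lemma i_op_functional_scale: "i_op (\<lambda>z. c * f z) = (\<lambda>t. smul c (i_op f t))"
  by (rule i_op_eqI[OF lin_functional_scale[OF f]])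
    (simp add: is_contraction_def lin_map_def i_op_add i_op_smul i_op_emb_tmult
      smul_add_right smul_diff_right tmult_smul_right mult.commute)

end

lemma i_op_functional_add:
  assumes f: "lin_functional f" and g: "lin_functional g"
  shows "i_op (\<lambda>z. f z + g z) = (\<lambda>t. i_op f t + i_op g t)"
  by (rule i_op_eqI[OF lin_functional_add[OF f g]])
    (simp add: f g is_contraction_def lin_map_def i_op_add[OF f] i_op_add[OF g] i_op_smul[OF f]
      i_op_smul[OF g] i_op_emb_tmult[OF f] i_op_emb_tmult[OF g] smul_add_right smul_add_left
      tmult_add_right algebra_simps)

lemma i_op_anticommute:
  assumes f: "lin_functional f" and g: "lin_functional g"
  shows "i_op f (i_op g z) = - i_op g (i_op f z)"
proof (induction z rule: tens_induct)
  case (emb y z)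
  then show ?case
    by (simp add: i_op_emb_tmult[OF f] i_op_emb_tmult[OF g] i_op_diff[OF f] i_op_diff[OF g]
        i_op_smul[OF f] i_op_smul[OF g] tmult_diff_right tmult_minus_right)
qed (simp_all add: f g i_op_add i_op_smul smul_add_right smul_minus_one[symmetric])

text \<open>
  The recursion for \<open>i\<^sub>f\<close> only peels off left factors, so right multiplication by a
  generator \<open>y\<close> with \<open>f(y) = 0\<close> is handled by induction on the left factor.
\<close>
lemma i_op_tmult_subalg_gen:
  assumes f: "lin_functional f" and S: "\<And>y. y \<in> S \<Longrightarrow> f y = 0" and w: "w \<in> subalg_gen S"
  shows "i_op f (u \<otimes>\<^sub>T w) = i_op f u \<otimes>\<^sub>T w"
  using w
proof (induction w arbitrary: u rule: subalg_gen.induct)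
  case (gen y)
  show ?case
  proof (induction u rule: tens_induct)
    case one
    show ?case using i_op_emb_tmult[OF f, of y tone] S[OF gen] f by simp
  next
    case (emb z u)
    then show ?case
      by (simp add: i_op_emb_tmult[OF f] tmult_assoc tmult_diff_left tmult_smul_left)
  qed (simp_all add: f i_op_add i_op_smul tmult_add_left tmult_smul_left)
next
  case (mult v v')
  then show ?case by (simp add: tmult_assoc[symmetric])
qed (simp_all add: f i_op_add i_op_smul tmult_add_right tmult_smul_right)

lemma i_op_subalg_gen_eq_0:
  assumes f: "lin_functional f" and S: "\<And>y. y \<in> S \<Longrightarrow> f y = 0" and w: "w \<in> subalg_gen S"
  shows "i_op f w = 0"
  using i_op_tmult_subalg_gen[OF f S w, of tone] f by simp

definition lambda_gen ::
    "(('b, 'k::field) vec \<Rightarrow> ('b, 'k) vec \<Rightarrow> 'k) \<Rightarrow> ('b, 'k) vec \<Rightarrow> ('b, 'k) tens \<Rightarrow> ('b, 'k) tens" where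
  "lambda_gen F x t = emb x \<otimes>\<^sub>T t + i_op (F x) t"

definition is_Lambda ::
    "(('b, 'k::field) vec \<Rightarrow> ('b, 'k) vec \<Rightarrow> 'k) \<Rightarrow> (('b, 'k) tens \<Rightarrow> ('b, 'k) tens \<Rightarrow> ('b, 'k) tens) \<Rightarrow> bool" where
  "is_Lambda F \<Lambda> \<longleftrightarrow> unital_alg_hom \<Lambda> \<and> (\<forall>x. \<Lambda> (emb x) = lambda_gen F x)"

lemma Lambda_eq_The_is_Lambda: "Lambda F = (THE \<Lambda>. is_Lambda F \<Lambda>)"
  unfolding Lambda_def is_Lambda_def lambda_gen_def e_op_def iF_op_def ..

lemma is_Lambda_unique:
  assumes "is_Lambda F A" "is_Lambda F B"
  shows "A = B"
proof
  fix u
  show "A u = B u"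
    using assms unfolding is_Lambda_def unital_alg_hom_def
    by (induction u rule: tens_induct) simp_all
qed

fun lambda_word ::
    "(('b, 'k::field) vec \<Rightarrow> ('b, 'k) vec \<Rightarrow> 'k) \<Rightarrow> 'b list \<Rightarrow> ('b, 'k) tens \<Rightarrow> ('b, 'k) tens" where
  "lambda_word F [] = id"
| "lambda_word F (b # w) = lambda_gen F (Poly_Mapping.single b 1) \<circ> lambda_word F w"

lemma lambda_word_append: "lambda_word F (a @ b) = lambda_word F a \<circ> lambda_word F b"
  by (induction a) auto

context
  fixes F :: "('b, 'k::field) vec \<Rightarrow> ('b, 'k) vec \<Rightarrow> 'k"
  assumes F: "bilinear_form F"
begin

lemma lin_map_lambda_gen: "lin_map (lambda_gen F x)"
  using lin_map_i_op[OF bilinear_form_right[OF F]]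
  unfolding lin_map_def lambda_gen_def by (simp add: tmult_add_right tmult_smul_right smul_add_right)

lemma lambda_gen_add: "lambda_gen F (x + y) t = lambda_gen F x t + lambda_gen F y t"
  using i_op_functional_add[OF bilinear_form_right[OF F] bilinear_form_right[OF F], of x y]
  by (simp add: lambda_gen_def bilinear_form_add_left[OF F] emb_add tmult_add_left)

lemma lambda_gen_smul: "lambda_gen F (smul c x) t = smul c (lambda_gen F x t)"
  using i_op_functional_scale[OF bilinear_form_right[OF F], of c x]
  by (simp add: lambda_gen_def bilinear_form_smul_left[OF F] emb_smul tmult_smul_left smul_add_right)

lemma lin_map_lambda_word: "lin_map (lambda_word F w)"
  by (induction w) (auto simp: lin_map_def lin_map_add[OF lin_map_lambda_gen] lin_map_smul[OF lin_map_lambda_gen])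

definition Lambda_ext :: "('b, 'k) tens \<Rightarrow> ('b, 'k) tens \<Rightarrow> ('b, 'k) tens" where
  "Lambda_ext u t = lin_ext (\<lambda>w. lambda_word F w t) u"

lemma lin_map_Lambda_ext: "lin_map (Lambda_ext u)"
  unfolding lin_map_def Lambda_ext_def
  by (simp add: lin_map_add[OF lin_map_lambda_word] lin_map_smul[OF lin_map_lambda_word]
      lin_ext_add_fun lin_ext_smul_fun)

lemma Lambda_ext_tmult: "Lambda_ext (u \<otimes>\<^sub>T v) t = Lambda_ext u (Lambda_ext v t)"
proof (induction u rule: poly_mapping_single_induct)
  case (single a c)
  note lin = lin_map_Lambda_ext[of "Poly_Mapping.single a c"]
  show ?case
  proof (induction v rule: poly_mapping_single_induct)
    case zero then show ?case using lin_map_zero[OF lin] by (simp add: Lambda_ext_def)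
  next
    case (add v1 v2) then show ?case using lin_map_add[OF lin] by (simp add: Lambda_ext_def tmult_add_right lin_ext_add)
  next
    case (single b d)
    show ?case using lin_map_smul[OF lin_map_lambda_word]
      by (simp add: Lambda_ext_def tmult_single lin_ext_single lambda_word_append mult.commute)
  qed
qed (simp_all add: Lambda_ext_def tmult_add_left lin_ext_add)

lemma Lambda_ext_emb: "Lambda_ext (emb x) t = lambda_gen F x t"
proof (induction x rule: poly_mapping_single_induct)
  case zero
  show ?case using lambda_gen_add[of 0 0 t] by (simp add: Lambda_ext_def)
next
  case (add x y) then show ?case by (simp add: Lambda_ext_def emb_add lin_ext_add lambda_gen_add)
next
  case (single b c)
  have "lambda_gen F (Poly_Mapping.single b c) t = smul c (lambda_gen F (Poly_Mapping.single b 1) t)"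
    using lambda_gen_smul by (metis single_eq_smul_single_one)
  then show ?case by (simp add: Lambda_ext_def emb_single lin_ext_single)
qed

lemma is_Lambda_Lambda_ext: "is_Lambda F Lambda_ext"
  unfolding is_Lambda_def unital_alg_hom_def
  by (simp add: fun_eq_iff Lambda_ext_def lin_ext_add lin_ext_smul tone_def lin_ext_single
      Lambda_ext_tmult[unfolded Lambda_ext_def] Lambda_ext_emb[unfolded Lambda_ext_def])

lemma is_Lambda_Lambda: "is_Lambda F (Lambda F)"
  unfolding Lambda_eq_The_is_Lambda
  by (rule theI[of _ Lambda_ext]) (auto intro: is_Lambda_Lambda_ext is_Lambda_unique)

lemma Lambda_add: "Lambda F (u + v) t = Lambda F u t + Lambda F v t"
  using is_Lambda_Lambda unfolding is_Lambda_def unital_alg_hom_def by simp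

lemma Lambda_smul: "Lambda F (smul c u) t = smul c (Lambda F u t)"
  using is_Lambda_Lambda unfolding is_Lambda_def unital_alg_hom_def by simp

lemma Lambda_tmult: "Lambda F (u \<otimes>\<^sub>T v) t = Lambda F u (Lambda F v t)"
  using is_Lambda_Lambda unfolding is_Lambda_def unital_alg_hom_def by simp

lemma Lambda_tone: "Lambda F tone t = t"
  using is_Lambda_Lambda unfolding is_Lambda_def unital_alg_hom_def by simp

lemma Lambda_emb: "Lambda F (emb x) t = emb x \<otimes>\<^sub>T t + i_op (F x) t"
  using is_Lambda_Lambda unfolding is_Lambda_def lambda_gen_def by simp

lemma Lambda_zero: "Lambda F 0 t = 0"
  using Lambda_smul[of 0 0 t] by simp

lemma Lambda_diff: "Lambda F (u - v) t = Lambda F u t - Lambda F v t"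
  using Lambda_add[of u "- v" t] Lambda_smul[of "-1" v t] by (simp add: smul_minus_one)

lemma Lambda_emb_tmult:
  "Lambda F (emb x \<otimes>\<^sub>T u) t = emb x \<otimes>\<^sub>T Lambda F u t + i_op (F x) (Lambda F u t)"
  by (simp add: Lambda_tmult Lambda_emb)

text \<open>
  The sign from \<open>i_op_anticommute\<close> cancels against the sign in the defining recursion
  of \<open>i_op g\<close>.
\<close>
lemma i_op_Lambda_commute:
  assumes g: "lin_functional g" and S: "\<And>y. y \<in> S \<Longrightarrow> g y = 0" and w: "w \<in> subalg_gen S"
  shows "i_op g (Lambda F v w) = Lambda F (i_op g v) w"
proof (induction v rule: tens_induct)
  case one
  show ?case using i_op_subalg_gen_eq_0[OF g S w] g by (simp add: Lambda_tone Lambda_zero)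
next
  case (emb y v)
  define z where "z = Lambda F v w"
  have "i_op g (Lambda F (emb y \<otimes>\<^sub>T v) w) = i_op g (emb y \<otimes>\<^sub>T z + i_op (F y) z)"
    by (simp add: Lambda_emb_tmult z_def)
  also have "\<dots> = smul (g y) z - emb y \<otimes>\<^sub>T i_op g z - i_op (F y) (i_op g z)"
    by (simp add: g i_op_add i_op_emb_tmult i_op_anticommute[OF g bilinear_form_right[OF F]])
  also have "\<dots> = Lambda F (i_op g (emb y \<otimes>\<^sub>T v)) w"
    using emb by (simp add: g i_op_emb_tmult Lambda_diff Lambda_smul Lambda_emb_tmult z_def)
  finally show ?case .
qed (simp_all add: g i_op_add i_op_smul Lambda_add Lambda_smul)

end

theorem mainTheorem2:
  fixes F G :: "('b, 'k::field) vec \<Rightarrow> ('b, 'k) vec \<Rightarrow> 'k"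
    and u v w :: "('b, 'k) tens"
  assumes "bilinear_form F" and "bilinear_form G"
    and "w \<in> subalg_gen (RadR G)"
  shows "Lambda F (Lambda G u v) w = Lambda (\<lambda>x y. F x y + G x y) u (Lambda F v w)"
proof -
  note F = assms(1) and G = assms(2)
  define H where "H = (\<lambda>x y. F x y + G x y)"
  have H: "bilinear_form H" unfolding H_def using bilinear_form_add[OF F G] .
  have i_op_H: "i_op (H x) t = i_op (F x) t + i_op (G x) t" for x t
    unfolding H_def by (simp add: i_op_functional_add[OF bilinear_form_right[OF F] bilinear_form_right[OF G]])
  have G_rad: "y \<in> RadR G \<Longrightarrow> G x y = 0" for x y unfolding RadR_def by blast
  have "Lambda F (Lambda G u v) w = Lambda H u (Lambda F v w)" for v
  proof (induction u arbitrary: v rule: tens_induct)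
    case (emb x u)
    define z where "z = Lambda F (Lambda G u v) w"
    have "Lambda F (Lambda G (emb x \<otimes>\<^sub>T u) v) w = emb x \<otimes>\<^sub>T z + i_op (F x) z + i_op (G x) z"
      by (simp add: Lambda_emb_tmult[OF G] Lambda_add[OF F] Lambda_emb_tmult[OF F] z_def
          i_op_Lambda_commute[OF F bilinear_form_right[OF G] G_rad assms(3)])
    also have "\<dots> = Lambda H (emb x \<otimes>\<^sub>T u) (Lambda F v w)"
      by (simp add: Lambda_emb_tmult[OF H] i_op_H z_def emb[of v] add.assoc)
    finally show ?case .
  qed (simp_all add: Lambda_tone Lambda_add Lambda_smul F G H)
  then show ?thesis unfolding H_def .
qed

end
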